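(* Let $\mathbb{T}=\mathbb{R}/2\pi\mathbb{Z}$, let $(a_k)_{k\ge1},(b_k)_{k\ge1}$ be independent stationary centered Gaussian sequences with common correlation function $\rho$ ($\mathbb{E}[a_ka_l]=\mathbb{E}[b_kb_l]=\rho(k-l)$), whose spectral measure $\mu$ (defined by $\rho(k)=\frac1{2\pi}\int_{\mathbb{T}}e^{-iku}d\mu(u)$) has a continuous positive density $\psi$ with respect to Lebesgue measure on $\mathbb{T}$. Let $X_n(s)=\frac{1}{\sqrt n}\sum_{k=1}^n(a_k\cos(ks)+b_k\sin(ks))$ and $r_n(s,t)=\mathbb{E}[X_n(s)X_n(t)]$. Let $a,b\in\{0,1,2,3,4\}$. Then, uniformly for $s\in\mathbb{T}$ and $u,v$ in any compact subset of $\mathbb{R}$, \[\lim_{n\to+\infty}\frac{1}{n^{a+b}}\,r_n^{(a,b)}\Big(s+\frac un,s+\frac vn\Big)=\psi(s)(-1)^b\,\mathrm{sinc}^{(a+b)}(u-v).\]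
   Context: $r_n^{(a,b)}=\partial_1^a\partial_2^b r_n$; $\mathrm{sinc}(x)=\sin x/x$ and $\mathrm{sinc}^{(m)}$ is its $m$-th derivative. *)

theory Defs
  imports "HOL-Probability.Probability"
begin

definition centered_gaussian_rv :: "'w measure \<Rightarrow> ('w \<Rightarrow> real) \<Rightarrow> bool" where
  "centered_gaussian_rv M X \<longleftrightarrow>
     X \<in> borel_measurable M \<and>
     ((AE \<omega> in M. X \<omega> = 0) \<or> (\<exists>\<sigma>>0. distributed M lborel X (normal_density 0 \<sigma>)))"

definition centered_gaussian_seq :: "'w measure \<Rightarrow> (nat \<Rightarrow> 'w \<Rightarrow> real) \<Rightarrow> bool" where
  "centered_gaussian_seq M a \<longleftrightarrow>
     (\<forall>I c. finite I \<longrightarrow> I \<subseteq> {1..} \<longrightarrow> centered_gaussian_rv M (\<lambda>\<omega>. \<Sum>k\<in>I. c k * a k \<omega>))"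

definition Xn :: "(nat \<Rightarrow> 'w \<Rightarrow> real) \<Rightarrow> (nat \<Rightarrow> 'w \<Rightarrow> real) \<Rightarrow> nat \<Rightarrow> real \<Rightarrow> 'w \<Rightarrow> real" where
  "Xn a b n s \<omega> = (1 / sqrt (real n)) *
     (\<Sum>k=1..n. a k \<omega> * cos (real k * s) + b k \<omega> * sin (real k * s))"

definition rn :: "'w measure \<Rightarrow> (nat \<Rightarrow> 'w \<Rightarrow> real) \<Rightarrow> (nat \<Rightarrow> 'w \<Rightarrow> real) \<Rightarrow> nat \<Rightarrow> real \<Rightarrow> real \<Rightarrow> real" where
  "rn M a b n s t = prob_space.expectation M (\<lambda>\<omega>. Xn a b n s \<omega> * Xn a b n t \<omega>)"

definition pderiv2 :: "nat \<Rightarrow> nat \<Rightarrow> (real \<Rightarrow> real \<Rightarrow> real) \<Rightarrow> real \<Rightarrow> real \<Rightarrow> real" where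
  "pderiv2 p q f s t = (deriv ^^ p) (\<lambda>x. (deriv ^^ q) (\<lambda>y. f x y) t) s"

end

theory Submission
  imports Defs
begin

(* Since r_n(s,t) = (1/n) sum_{k,l<=n} rho(k-l) cos(ks - lt), the scaled derivative equals (-1)^q G / n with
   G = sum_{k,l} rho(k-l) (k/n)^p (l/n)^q cos(kS - lT + (p+q) pi/2) at S = s + u/n, T = s + v/n.
   The spectral representation gives 2 pi G = int psi(x) H(S-x, T-x) dx over a period, where H(a,b) is the real
   part of e^(i(p+q)pi/2) A_p(a) conj(A_q(b)) with A_p(a) = sum_k (k/n)^p e^(ika).
   Abel summation yields |A_p(a)| <= 1/|sin(a/2)|, and int |A_p|^2 <= 2 pi n, so H concentrates near x = s and
   psi(x) can be replaced by psi(s) at cost eps n + O(1) for every eps > 0.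
   What remains is psi(s) int H = 2 pi psi(s) sum_k (k/n)^(p+q) cos(k(u-v)/n + (p+q) pi/2), i.e. 2 pi n psi(s)
   times a Riemann sum of int_0^1 x^(p+q) cos(x(u-v) + (p+q) pi/2) dx = sinc^(p+q)(u-v). *)

lemma abs_cos_diff_le: "\<bar>cos x - cos y\<bar> \<le> \<bar>x - y\<bar>" for x y :: real
proof -
  have "\<bar>cos x - cos y\<bar> = 2 * \<bar>sin ((x + y) / 2)\<bar> * \<bar>sin ((y - x) / 2)\<bar>"
    by (simp add: cos_diff_cos abs_mult)
  also have "\<dots> \<le> 2 * 1 * \<bar>(y - x) / 2\<bar>"
    by (intro mult_mono abs_sin_x_le_abs_x) auto
  finally show ?thesis by simp
qed

lemma abs_sin_diff_le: "\<bar>sin x - sin y\<bar> \<le> \<bar>x - y\<bar>" for x y :: real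
proof -
  have "\<bar>sin x - sin y\<bar> = 2 * \<bar>sin ((x - y) / 2)\<bar> * \<bar>cos ((x + y) / 2)\<bar>"
    by (simp add: sin_diff_sin abs_mult)
  also have "\<dots> \<le> 2 * \<bar>(x - y) / 2\<bar> * 1"
    by (intro mult_mono abs_sin_x_le_abs_x) auto
  finally show ?thesis by simp
qed

lemma abs_power_diff_le:
  fixes x y :: real
  assumes "x \<in> {0..1}" "y \<in> {0..1}"
  shows "\<bar>x ^ m - y ^ m\<bar> \<le> real m * \<bar>x - y\<bar>"
proof (induction m)
  case (Suc m)
  have "x ^ Suc m - y ^ Suc m = x * (x ^ m - y ^ m) + y ^ m * (x - y)"
    by (simp add: algebra_simps)
  then have "\<bar>x ^ Suc m - y ^ Suc m\<bar> \<le> \<bar>x\<bar> * \<bar>x ^ m - y ^ m\<bar> + \<bar>y ^ m\<bar> * \<bar>x - y\<bar>"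
    by (metis abs_mult abs_triangle_ineq)
  also have "\<dots> \<le> 1 * (real m * \<bar>x - y\<bar>) + 1 * \<bar>x - y\<bar>"
    using assms Suc by (intro add_mono mult_mono) (auto simp: power_abs power_le_one)
  finally show ?case by (simp add: algebra_simps)
qed simp

lemma abs_power_mult_cos_diff_le:
  fixes x y w c :: real
  assumes "x \<in> {0..1}" "y \<in> {0..1}"
  shows "\<bar>x ^ m * cos (x * w + c) - y ^ m * cos (y * w + c)\<bar> \<le> (real m + \<bar>w\<bar>) * \<bar>x - y\<bar>"
proof -
  have "x ^ m * cos (x * w + c) - y ^ m * cos (y * w + c) =
      (x ^ m - y ^ m) * cos (x * w + c) + y ^ m * (cos (x * w + c) - cos (y * w + c))"
    by (simp add: algebra_simps)
  then have "\<bar>x ^ m * cos (x * w + c) - y ^ m * cos (y * w + c)\<bar> \<le>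
      \<bar>x ^ m - y ^ m\<bar> * \<bar>cos (x * w + c)\<bar> + \<bar>y ^ m\<bar> * \<bar>cos (x * w + c) - cos (y * w + c)\<bar>"
    by (metis abs_mult abs_triangle_ineq)
  also have "\<dots> \<le> (real m * \<bar>x - y\<bar>) * 1 + 1 * \<bar>(x * w + c) - (y * w + c)\<bar>"
    using assms
    by (intro add_mono mult_mono abs_power_diff_le abs_cos_diff_le)
       (auto simp: power_abs power_le_one)
  also have "\<bar>(x * w + c) - (y * w + c)\<bar> = \<bar>w\<bar> * \<bar>x - y\<bar>"
    by (simp flip: abs_mult add: algebra_simps)
  finally show ?thesis by (simp add: algebra_simps)
qed

lemma norm_cis_minus_one: "cmod (cis a - 1) = 2 * \<bar>sin (a / 2)\<bar>"
proof -
  have c: "cos a = 1 - 2 * (sin (a / 2))\<^sup>2" and s: "sin a = 2 * sin (a / 2) * cos (a / 2)"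
    using cos_double_sin[of "a / 2"] sin_double[of "a / 2"] by simp_all
  have "(cmod (cis a - 1))\<^sup>2 = (cos a - 1)\<^sup>2 + (sin a)\<^sup>2"
    by (simp add: cmod_def)
  also have "\<dots> = 4 * (sin (a / 2))\<^sup>2 * ((sin (a / 2))\<^sup>2 + (cos (a / 2))\<^sup>2)"
    unfolding c s power2_eq_square by algebra
  also have "\<dots> = (2 * \<bar>sin (a / 2)\<bar>)\<^sup>2"
    by (simp add: power_mult_distrib)
  finally show ?thesis
    by (metis abs_ge_zero mult_nonneg_nonneg norm_ge_zero power2_eq_iff_nonneg zero_le_numeral)
qed

lemma has_integral_cos_int_mult:
  fixes j :: int
  shows "((\<lambda>x. cos (of_int j * x + c)) has_integral (if j = 0 then 2 * pi * cos c else 0)) {0..2 * pi}"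
proof (cases "j = 0")
  case False
  have "((\<lambda>x. cos (of_int j * x + c)) has_integral
         (sin (of_int j * (2 * pi) + c) / of_int j - sin (of_int j * 0 + c) / of_int j)) {0..2 * pi}"
    using False
    by (intro fundamental_theorem_of_calculus)
       (auto intro!: derivative_eq_intros simp flip: has_real_derivative_iff_has_vector_derivative)
  moreover have "sin (of_int j * (2 * pi) + c) = sin c"
    using sin_int_2pin[of j] cos_int_2pin[of j] by (simp add: sin_add mult.commute)
  ultimately show ?thesis using False by simp
qed (simp add: has_integral_const_real[of "cos c" 0 "2 * pi", simplified])

lemma higher_deriv_cos_sum:
  fixes c \<alpha> \<beta> :: "'i \<Rightarrow> real"
  assumes "finite I"
  shows "(deriv ^^ j) (\<lambda>y. \<Sum>i\<in>I. c i * cos (\<alpha> i * y + \<beta> i)) =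
         (\<lambda>y. \<Sum>i\<in>I. c i * \<alpha> i ^ j * cos (\<alpha> i * y + \<beta> i + real j * pi / 2))"
proof (induction j)
  case (Suc j)
  have shift: "cos (t + real (Suc j) * pi / 2) = - sin (t + real j * pi / 2)" for t
    by (simp add: minus_sin_cos_eq distrib_right add_divide_distrib algebra_simps)
  have "((\<lambda>y. \<Sum>i\<in>I. c i * \<alpha> i ^ j * cos (\<alpha> i * y + \<beta> i + real j * pi / 2)) has_real_derivative
        (\<Sum>i\<in>I. c i * \<alpha> i ^ Suc j * cos (\<alpha> i * y + \<beta> i + real (Suc j) * pi / 2))) (at y)" for y
    unfolding shift
    by (rule derivative_eq_intros refl | simp)+ (simp add: sum_negf[symmetric] algebra_simps)
  then show ?case
    using Suc by (auto intro!: DERIV_imp_deriv)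
qed simp

lemma higher_deriv_sinc:
  "(deriv ^^ m) sinc = (\<lambda>w. integral {0..1} (\<lambda>x. x ^ m * cos (x * w + real m * pi / 2)))"
proof (induction m)
  case 0
  show ?case
  proof
    fix w :: real
    show "(deriv ^^ 0) sinc w = integral {0..1} (\<lambda>x. x ^ 0 * cos (x * w + real 0 * pi / 2))"
    proof (cases "w = 0")
      case False
      have "((\<lambda>x. cos (x * w)) has_integral (sin (1 * w) / w - sin (0 * w) / w)) {0..1}"
        using False
        by (intro fundamental_theorem_of_calculus)
           (auto intro!: derivative_eq_intros simp flip: has_real_derivative_iff_has_vector_derivative)
      then show ?thesis using False by (simp add: integral_unique)
    qed simp
  qed
next
  case (Suc m)
  have "((\<lambda>w. integral (cbox 0 1) (\<lambda>x. x ^ m * cos (x * w + real m * pi / 2))) has_field_derivative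
        integral (cbox 0 1) (\<lambda>x. x ^ Suc m * cos (x * w + real (Suc m) * pi / 2))) (at w within UNIV)"
    for w :: real
  proof (rule leibniz_rule_field_derivative)
    fix w x :: real
    have "cos (x * w + real (Suc m) * pi / 2) = - sin (x * w + real m * pi / 2)"
      by (simp add: minus_sin_cos_eq distrib_right add_divide_distrib algebra_simps)
    then show "((\<lambda>w. x ^ m * cos (x * w + real m * pi / 2)) has_field_derivative
        x ^ Suc m * cos (x * w + real (Suc m) * pi / 2)) (at w within UNIV)"
      by (auto intro!: derivative_eq_intros)
  next
    show "continuous_on (UNIV \<times> cbox 0 1) (\<lambda>(w, x). x ^ Suc m * cos (x * w + real (Suc m) * pi / 2))"
      by (simp add: split_beta, intro continuous_intros)
  qed (auto intro!: integrable_continuous_interval continuous_intros)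
  then show ?case
    using Suc by (auto simp: cbox_interval intro!: DERIV_imp_deriv)
qed

section \<open>Riemann sums and summation by parts\<close>

lemma summation_by_parts_powers:
  fixes w :: "nat \<Rightarrow> real" and z :: complex
  assumes "w 0 = 0"
  shows "(z - 1) * (\<Sum>k=1..N. of_real (w k) * z ^ k) =
         of_real (w N) * z ^ Suc N - (\<Sum>k=1..N. of_real (w k - w (k - 1)) * z ^ k)"
proof (induction N)
  case (Suc N)
  then show ?case by (simp add: algebra_simps)
qed (simp add: assms)

lemma norm_mult_sum_mono_weights_powers_le:
  fixes w :: "nat \<Rightarrow> real" and z :: complex
  assumes "w 0 = 0" "mono w" "cmod z = 1"
  shows "cmod (z - 1) * cmod (\<Sum>k=1..N. of_real (w k) * z ^ k) \<le> 2 * w N"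
proof -
  have increments: "cmod (of_real (w k - w (k - 1)) * z ^ k) = w k - w (k - 1)" for k
    using monoD[OF assms(2), of "k - 1" k] assms(3) by (simp add: norm_mult norm_power del: of_real_diff)
  have "w N \<ge> 0"
    using assms(1,2) by (metis le0 monoD)
  then have last: "cmod (of_real (w N) * z ^ Suc N) = w N"
    using assms(3) by (simp add: norm_mult norm_power)
  have "cmod (z - 1) * cmod (\<Sum>k=1..N. of_real (w k) * z ^ k) =
        cmod (of_real (w N) * z ^ Suc N - (\<Sum>k=1..N. of_real (w k - w (k - 1)) * z ^ k))"
    using summation_by_parts_powers[of w z N, OF assms(1)] by (metis norm_mult)
  also have "\<dots> \<le> cmod (of_real (w N) * z ^ Suc N) + (\<Sum>k=1..N. cmod (of_real (w k - w (k - 1)) * z ^ k))"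
    by (intro order.trans[OF norm_triangle_ineq4] add_left_mono norm_sum)
  also have "\<dots> = w N + (\<Sum>k=1..N. w k - w (k - 1))"
    by (simp only: last increments)
  also have "(\<Sum>k=1..N. w k - w (k - 1)) = w N"
    using assms(1) by (induction N) auto
  finally show ?thesis by simp
qed

lemma cell_integral_Lipschitz_error:
  fixes f :: "real \<Rightarrow> real"
  assumes "a \<le> b" "continuous_on {a..b} f"
    and lip: "\<And>x. x \<in> {a..b} \<Longrightarrow> \<bar>f b - f x\<bar> \<le> L * (b - a)"
  shows "\<bar>f b * (b - a) - integral {a..b} f\<bar> \<le> L * (b - a)\<^sup>2"
proof -
  have "f b * (b - a) - integral {a..b} f = integral {a..b} (\<lambda>x. f b - f x)"
    using assms(1,2) by (simp add: integral_diff integrable_continuous_interval)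
  also have "norm \<dots> \<le> L * (b - a) * (b - a)"
    using assms by (intro integral_bound) (auto intro!: continuous_intros)
  finally show ?thesis by (simp add: power2_eq_square)
qed

lemma riemann_sum_Lipschitz_error:
  fixes f :: "real \<Rightarrow> real" and n :: nat
  assumes cont: "continuous_on {0..1} f"
    and lip: "\<And>x y. x \<in> {0..1} \<Longrightarrow> y \<in> {0..1} \<Longrightarrow> \<bar>f x - f y\<bar> \<le> L * \<bar>x - y\<bar>"
    and n: "n > 0"
  shows "\<bar>(\<Sum>k=1..n. f (real k / real n)) / real n - integral {0..1} f\<bar> \<le> L / real n"
proof -
  have partial: "\<bar>(\<Sum>k=1..N. f (real k / real n)) / real n - integral {0..real N / real n} f\<bar>
      \<le> real N * L / (real n)\<^sup>2" if "N \<le> n" for N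
    using that
  proof (induction N)
    case (Suc N)
    define a b where "a = real N / real n" and "b = real (Suc N) / real n"
    have ab: "0 \<le> a" "a \<le> b" "b \<le> 1" "b - a = 1 / real n"
      using Suc.prems n by (auto simp: a_def b_def divide_simps)
    have "L \<ge> 0"
      using lip[of 0 1] by auto
    have cell: "\<bar>f b * (b - a) - integral {a..b} f\<bar> \<le> L * (b - a)\<^sup>2"
    proof (rule cell_integral_Lipschitz_error)
      show "continuous_on {a..b} f" using cont ab by (auto intro: continuous_on_subset)
      show "\<bar>f b - f x\<bar> \<le> L * (b - a)" if "x \<in> {a..b}" for x
      proof -
        have "\<bar>f b - f x\<bar> \<le> L * \<bar>b - x\<bar>"
          using lip[of b x] that ab by auto
        also have "\<dots> \<le> L * (b - a)"
          using that \<open>L \<ge> 0\<close> by (intro mult_left_mono) auto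
        finally show ?thesis .
      qed
    qed (use ab in auto)
    then have cell': "\<bar>f b / real n - integral {a..b} f\<bar> \<le> L / (real n)\<^sup>2"
      using ab(4) by (simp add: power_divide)
    have "integral {0..b} f = integral {0..a} f + integral {a..b} f"
      using ab integrable_continuous_interval[OF continuous_on_subset[OF cont]]
      by (intro Henstock_Kurzweil_Integration.integral_combine[symmetric]) auto
    then have "(\<Sum>k=1..Suc N. f (real k / real n)) / real n - integral {0..b} f =
        ((\<Sum>k=1..N. f (real k / real n)) / real n - integral {0..a} f) + (f b / real n - integral {a..b} f)"
      by (simp add: b_def add_divide_distrib)
    moreover have "\<bar>(\<Sum>k=1..N. f (real k / real n)) / real n - integral {0..a} f\<bar> \<le> real N * L / (real n)\<^sup>2"
      using Suc by (simp add: a_def)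
    ultimately have "\<bar>(\<Sum>k=1..Suc N. f (real k / real n)) / real n - integral {0..b} f\<bar>
        \<le> real N * L / (real n)\<^sup>2 + L / (real n)\<^sup>2"
      using cell' by linarith
    then show ?case
      by (simp add: b_def add_divide_distrib distrib_right)
  qed simp
  from partial[of n] n show ?thesis by (simp add: power2_eq_square)
qed

lemma periodic_normalize_angle:
  assumes "\<And>x. f (x + 2 * pi) = f x"
  shows "f (normalize_angle x) = f x"
proof -
  interpret periodic_fun_simple f "2 * pi"
    by standard (rule assms)
  show ?thesis
    unfolding normalize_angle_def by (rule minus_of_int)
qed

lemma abs_normalize_angle_less_if_abs_sin_half_less:
  assumes "0 < d" "d \<le> pi" "\<bar>sin (y / 2)\<bar> < sin (d / 2)"
  shows "\<bar>normalize_angle y\<bar> < d"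
proof -
  define z where "z = normalize_angle y"
  have z: "- pi < z" "z \<le> pi"
    unfolding z_def by auto
  have "\<bar>sin (y / 2)\<bar> = \<bar>sin (z / 2)\<bar>"
    using periodic_normalize_angle[of "\<lambda>y. \<bar>sin (y / 2)\<bar>"]
    by (simp add: z_def add_divide_distrib)
  also have "\<dots> = sin (\<bar>z\<bar> / 2)"
    using z sin_ge_zero[of "\<bar>z\<bar> / 2"] by (cases "z \<ge> 0") auto
  finally have "sin (\<bar>z\<bar> / 2) < sin (d / 2)"
    using assms(3) by simp
  then have "\<bar>z\<bar> / 2 < d / 2"
    using z assms(1,2) by (subst (asm) sin_mono_less_eq) auto
  then show ?thesis
    by (simp add: z_def)
qed

(* |sin ((x - y) / 2)| is half the chordal distance between x and y on the circle R / 2 pi Z. *)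
lemma periodic_continuous_modulus:
  fixes f :: "real \<Rightarrow> real"
  assumes cont: "continuous_on UNIV f" and per: "\<And>x. f (x + 2 * pi) = f x" and "e > 0"
  obtains \<eta> where "\<eta> > 0" "\<And>x y. \<bar>sin ((x - y) / 2)\<bar> < \<eta> \<Longrightarrow> \<bar>f x - f y\<bar> < e"
proof -
  have "uniformly_continuous_on {-2 * pi..2 * pi} f"
    by (intro compact_uniformly_continuous continuous_on_subset[OF cont]) auto
  then obtain d where d: "d > 0" "\<And>x x'. x \<in> {-2 * pi..2 * pi} \<Longrightarrow> x' \<in> {-2 * pi..2 * pi} \<Longrightarrow>
      dist x' x < d \<Longrightarrow> dist (f x') (f x) < e"
    unfolding uniformly_continuous_on_def using \<open>e > 0\<close> by metis
  define d' where "d' = min d pi"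
  have d': "0 < d'" "d' \<le> d" "d' \<le> pi"
    using d(1) by (auto simp: d'_def)
  have "\<bar>f x - f y\<bar> < e" if "\<bar>sin ((x - y) / 2)\<bar> < sin (d' / 2)" for x y
  proof -
    define y0 z where "y0 = normalize_angle y" and "z = normalize_angle (x - y)"
    have "\<bar>z\<bar> < d'"
      unfolding z_def using d' that by (intro abs_normalize_angle_less_if_abs_sin_half_less)
    moreover have "- pi < y0" "y0 \<le> pi"
      unfolding y0_def by auto
    moreover have "f x = f (y0 + z)"
    proof -
      have shifted_per: "f (t + 2 * pi + c) = f (t + c)" for t c
        using per[of "t + c"] by (simp add: algebra_simps)
      have "f x = f ((x - y) + y)" by simp
      also have "\<dots> = f (z + y)"
        using periodic_normalize_angle[of "\<lambda>t. f (t + y)" "x - y"] shifted_per by (simp add: z_def)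
      also have "\<dots> = f (y0 + z)"
        using periodic_normalize_angle[of "\<lambda>t. f (t + z)" y] shifted_per by (simp add: y0_def add.commute)
      finally show ?thesis .
    qed
    moreover have "f y = f y0"
      using periodic_normalize_angle[of f, OF per] by (simp add: y0_def)
    ultimately show ?thesis
      using d(2)[of y0 "y0 + z"] d' by (simp add: dist_real_def abs_less_iff)
  qed
  moreover have "sin (d' / 2) > 0"
    using d' by (intro sin_gt_zero) auto
  ultimately show ?thesis
    using that by blast
qed

lemma periodic_continuous_bounded:
  fixes f :: "real \<Rightarrow> real"
  assumes cont: "continuous_on UNIV f" and per: "\<And>x. f (x + 2 * pi) = f x"
  obtains B where "\<And>x. \<bar>f x\<bar> \<le> B"
proof -
  have "bounded (f ` {-pi..pi})"
    by (intro compact_imp_bounded compact_continuous_image continuous_on_subset[OF cont]) auto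
  then obtain B where B: "\<And>y. y \<in> f ` {-pi..pi} \<Longrightarrow> \<bar>y\<bar> \<le> B"
    by (auto simp: bounded_iff)
  have "\<bar>f x\<bar> \<le> B" for x
    using B[OF imageI[of "normalize_angle x"]] periodic_normalize_angle[of f, OF per]
      normalize_angle_lbound[of x] normalize_angle_ubound[of x]
    by simp
  then show ?thesis by (rule that)
qed

section \<open>The covariance of the random trigonometric polynomial\<close>

lemma centered_gaussian_seq_term:
  assumes "centered_gaussian_seq M a" "k \<ge> 1"
  shows "centered_gaussian_rv M (a k)"
  using assms unfolding centered_gaussian_seq_def
  by (auto dest!: spec[of _ "{k}"] spec[of _ "\<lambda>_. 1"])

lemma (in prob_space) centered_gaussian_rv_moments:
  assumes "centered_gaussian_rv M X"
  shows "integrable M (\<lambda>\<omega>. (X \<omega>)\<^sup>2)" "expectation X = 0"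
proof -
  have X: "X \<in> borel_measurable M"
    using assms by (simp add: centered_gaussian_rv_def)
  have "integrable M (\<lambda>\<omega>. (X \<omega>)\<^sup>2) \<and> expectation X = 0"
  proof (cases "AE \<omega> in M. X \<omega> = 0")
    case True
    have "integrable M (\<lambda>\<omega>. (X \<omega>)\<^sup>2) \<longleftrightarrow> integrable M (\<lambda>\<omega>. 0::real)"
      using True X by (intro integrable_cong_AE) auto
    moreover have "expectation X = expectation (\<lambda>\<omega>. 0::real)"
      using True X by (intro integral_cong_AE) auto
    ultimately show ?thesis by simp
  next
    case False
    then obtain \<sigma> where \<sigma>: "\<sigma> > 0" and D: "distributed M lborel X (normal_density 0 \<sigma>)"
      using assms by (auto simp: centered_gaussian_rv_def)
    have "integrable lborel (\<lambda>x. normal_density 0 \<sigma> x * x\<^sup>2)"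
      using integrable_normal_moment[OF \<sigma>, of 0 2] by simp
    then show ?thesis
      using distributed_integrable[OF D, of "\<lambda>x. x\<^sup>2"] normal_distributed_expectation[OF \<sigma> D]
      by (simp add: normal_density_nonneg)
  qed
  then show "integrable M (\<lambda>\<omega>. (X \<omega>)\<^sup>2)" "expectation X = 0" by auto
qed

lemma (in prob_space) integrable_mult_if_square_integrable:
  fixes X Y :: "'a \<Rightarrow> real"
  assumes "integrable M (\<lambda>\<omega>. (X \<omega>)\<^sup>2)" "integrable M (\<lambda>\<omega>. (Y \<omega>)\<^sup>2)"
    "X \<in> borel_measurable M" "Y \<in> borel_measurable M"
  shows "integrable M (\<lambda>\<omega>. X \<omega> * Y \<omega>)"
proof (rule Bochner_Integration.integrable_bound[where f="\<lambda>\<omega>. (X \<omega>)\<^sup>2 + (Y \<omega>)\<^sup>2"])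
  have "\<bar>x * y\<bar> \<le> x\<^sup>2 + y\<^sup>2" for x y :: real
  proof -
    have "2 * (\<bar>x\<bar> * \<bar>y\<bar>) \<le> x\<^sup>2 + y\<^sup>2"
      using sum_squares_bound[of "\<bar>x\<bar>" "\<bar>y\<bar>"] by simp
    moreover have "0 \<le> \<bar>x\<bar> * \<bar>y\<bar>"
      by simp
    ultimately show ?thesis
      unfolding abs_mult by linarith
  qed
  then show "AE \<omega> in M. norm (X \<omega> * Y \<omega>) \<le> norm ((X \<omega>)\<^sup>2 + (Y \<omega>)\<^sup>2)"
    by simp
qed (use assms in auto)

lemma (in prob_space) has_bochner_integral_mult_centered_gaussian:
  assumes "centered_gaussian_rv M X" "centered_gaussian_rv M Y"
  shows "has_bochner_integral M (\<lambda>\<omega>. X \<omega> * Y \<omega>) (expectation (\<lambda>\<omega>. X \<omega> * Y \<omega>))"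
  using assms centered_gaussian_rv_moments(1)[OF assms(1)] centered_gaussian_rv_moments(1)[OF assms(2)]
  by (intro has_bochner_integral_integrable integrable_mult_if_square_integrable)
     (auto simp: centered_gaussian_rv_def)

lemma Xn_mult_Xn:
  "Xn a b n s \<omega> * Xn a b n t \<omega> = (1 / real n) * (\<Sum>k=1..n. \<Sum>l=1..n.
      (a k \<omega> * a l \<omega> * (cos (real k * s) * cos (real l * t)) + a k \<omega> * b l \<omega> * (cos (real k * s) * sin (real l * t)))
    + (b k \<omega> * a l \<omega> * (sin (real k * s) * cos (real l * t)) + b k \<omega> * b l \<omega> * (sin (real k * s) * sin (real l * t))))"
proof -
  have h: "(1 / sqrt (real n)) * (1 / sqrt (real n)) = 1 / real n"
    by (simp flip: real_sqrt_mult)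
  have "Xn a b n s \<omega> * Xn a b n t \<omega> = ((1 / sqrt (real n)) * (1 / sqrt (real n))) *
      ((\<Sum>k=1..n. a k \<omega> * cos (real k * s) + b k \<omega> * sin (real k * s)) *
       (\<Sum>l=1..n. a l \<omega> * cos (real l * t) + b l \<omega> * sin (real l * t)))"
    unfolding Xn_def by (simp only: ac_simps)
  also have "\<dots> = (1 / real n) * (\<Sum>k=1..n. \<Sum>l=1..n.
      (a k \<omega> * cos (real k * s) + b k \<omega> * sin (real k * s)) * (a l \<omega> * cos (real l * t) + b l \<omega> * sin (real l * t)))"
    unfolding h sum_product ..
  finally show ?thesis
    by (simp only: algebra_simps)
qed

locale gaussian_coefficients = prob_space M
  for M :: "'w measure" and a b :: "nat \<Rightarrow> 'w \<Rightarrow> real" and \<rho> :: "int \<Rightarrow> real" +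
  assumes gaussian_a: "centered_gaussian_seq M a"
    and gaussian_b: "centered_gaussian_seq M b"
    and indep_a_b: "indep_var (Pi\<^sub>M {1..} (\<lambda>_. borel)) (\<lambda>\<omega>. \<lambda>k\<in>{1..}. a k \<omega>)
                              (Pi\<^sub>M {1..} (\<lambda>_. borel)) (\<lambda>\<omega>. \<lambda>k\<in>{1..}. b k \<omega>)"
    and covariance_a: "\<And>k l. k \<ge> 1 \<Longrightarrow> l \<ge> 1 \<Longrightarrow> expectation (\<lambda>\<omega>. a k \<omega> * a l \<omega>) = \<rho> (int k - int l)"
    and covariance_b: "\<And>k l. k \<ge> 1 \<Longrightarrow> l \<ge> 1 \<Longrightarrow> expectation (\<lambda>\<omega>. b k \<omega> * b l \<omega>) = \<rho> (int k - int l)"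
begin

lemma expectation_a_mult_b:
  assumes "k \<ge> 1" "l \<ge> 1"
  shows "expectation (\<lambda>\<omega>. a k \<omega> * b l \<omega>) = 0"
proof -
  have "indep_var borel ((\<lambda>f. f k) \<circ> (\<lambda>\<omega>. \<lambda>k\<in>{1..}. a k \<omega>)) borel ((\<lambda>f. f l) \<circ> (\<lambda>\<omega>. \<lambda>k\<in>{1..}. b k \<omega>))"
    using assms by (intro indep_var_compose[OF indep_a_b]) auto
  moreover have "(\<lambda>f. f k) \<circ> (\<lambda>\<omega>. \<lambda>k\<in>{1..}. a k \<omega>) = a k" "(\<lambda>f. f l) \<circ> (\<lambda>\<omega>. \<lambda>k\<in>{1..}. b k \<omega>) = b l"
    using assms by (auto simp: fun_eq_iff)
  moreover have "centered_gaussian_rv M (a k)" "centered_gaussian_rv M (b l)"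
    using assms gaussian_a gaussian_b by (auto intro: centered_gaussian_seq_term)
  ultimately show ?thesis
    using indep_var_lebesgue_integral[of "a k" "b l"] centered_gaussian_rv_moments
      square_integrable_imp_integrable
    by (auto simp: centered_gaussian_rv_def)
qed

lemma rn_eq_cos_sum:
  "rn M a b n s t = (1 / real n) * (\<Sum>k=1..n. \<Sum>l=1..n. \<rho> (int k - int l) * cos (real k * s - real l * t))"
proof -
  have gaussian: "centered_gaussian_rv M (a k)" "centered_gaussian_rv M (b k)" if "k \<ge> 1" for k
    using that gaussian_a gaussian_b by (auto intro: centered_gaussian_seq_term)
  have aa: "has_bochner_integral M (\<lambda>\<omega>. a k \<omega> * a l \<omega>) (\<rho> (int k - int l))"
    and bb: "has_bochner_integral M (\<lambda>\<omega>. b k \<omega> * b l \<omega>) (\<rho> (int k - int l))"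
    and ab: "has_bochner_integral M (\<lambda>\<omega>. a k \<omega> * b l \<omega>) 0"
    and ba: "has_bochner_integral M (\<lambda>\<omega>. b k \<omega> * a l \<omega>) 0"
    if "k \<in> {1..n}" "l \<in> {1..n}" for k l
    using that has_bochner_integral_mult_centered_gaussian[OF gaussian(1) gaussian(1), of k l]
      has_bochner_integral_mult_centered_gaussian[OF gaussian(2) gaussian(2), of k l]
      has_bochner_integral_mult_centered_gaussian[OF gaussian(1) gaussian(2), of k l]
      has_bochner_integral_mult_centered_gaussian[OF gaussian(2) gaussian(1), of k l]
      covariance_a[of k l] covariance_b[of k l] expectation_a_mult_b[of k l] expectation_a_mult_b[of l k]
    by (simp_all add: mult.commute)
  have "has_bochner_integral M (\<lambda>\<omega>. Xn a b n s \<omega> * Xn a b n t \<omega>)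
     ((1 / real n) * (\<Sum>k=1..n. \<Sum>l=1..n.
      (\<rho> (int k - int l) * (cos (real k * s) * cos (real l * t)) + 0 * (cos (real k * s) * sin (real l * t)))
      + (0 * (sin (real k * s) * cos (real l * t)) + \<rho> (int k - int l) * (sin (real k * s) * sin (real l * t)))))"
    unfolding Xn_mult_Xn
    by (intro has_bochner_integral_mult_right has_bochner_integral_sum has_bochner_integral_add
        has_bochner_integral_mult_left aa bb ab ba) auto
  then show ?thesis
    unfolding rn_def by (auto dest!: has_bochner_integral_integral_eq simp: cos_diff algebra_simps)
qed

end

section \<open>Weighted trigonometric sums\<close>

lemma has_integral_spectral_density_cos:
  fixes \<psi> :: "real \<Rightarrow> real" and \<rho> :: "int \<Rightarrow> real"
  assumes cont: "continuous_on UNIV \<psi>"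
    and rep: "\<And>k. complex_of_real (\<rho> k) =
           integral {0..2*pi} (\<lambda>u. exp (- \<i> * of_int k * of_real u) * of_real (\<psi> u)) / (2 * pi)"
  shows "((\<lambda>x. \<psi> x * cos (c - of_int j * x)) has_integral (2 * pi * \<rho> j * cos c)) {0..2 * pi}"
proof -
  define F where "F u = exp (- \<i> * of_int j * of_real u) * of_real (\<psi> u)" for u
  have F: "F u = cis (- (of_int j * u)) * of_real (\<psi> u)" for u
    by (simp add: F_def cis_conv_exp mult.assoc)
  have "continuous_on {0..2 * pi} F"
    unfolding F by (intro continuous_intros continuous_on_subset[OF cont]) auto
  moreover have "integral {0..2 * pi} F = of_real (2 * pi * \<rho> j)"
    using rep[of j] by (simp add: F_def[abs_def] field_simps)
  ultimately have "(F has_integral of_real (2 * pi * \<rho> j)) {0..2 * pi}"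
    by (metis integrable_continuous_interval integrable_integral)
  then have "((\<lambda>x. cos c * Re (F x) - sin c * Im (F x)) has_integral
      (cos c * (2 * pi * \<rho> j) - sin c * 0)) {0..2 * pi}"
    by (intro has_integral_diff has_integral_mult_right)
       (auto dest: has_integral_Re has_integral_Im)
  moreover have "cos c * Re (F x) - sin c * Im (F x) = \<psi> x * cos (c - of_int j * x)" for x
    by (simp add: F cos_diff algebra_simps)
  ultimately show ?thesis
    by (simp add: algebra_simps)
qed

(* In the notation of the sketch at the top: A = weighted_cis_sum, H = weighted_cos_sum, G = weighted_covariance_sum. *)
definition power_weight :: "nat \<Rightarrow> nat \<Rightarrow> nat \<Rightarrow> real" where
  "power_weight p n k = (real k / real n) ^ p"

definition weighted_cis_sum :: "nat \<Rightarrow> nat \<Rightarrow> real \<Rightarrow> complex" where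
  "weighted_cis_sum p n \<alpha> = (\<Sum>k=1..n. of_real (power_weight p n k) * cis (real k * \<alpha>))"

definition weighted_cos_sum :: "nat \<Rightarrow> nat \<Rightarrow> nat \<Rightarrow> real \<Rightarrow> real \<Rightarrow> real \<Rightarrow> real" where
  "weighted_cos_sum p q n \<theta> \<alpha> \<beta> =
     (\<Sum>k=1..n. \<Sum>l=1..n. power_weight p n k * power_weight q n l * cos (real k * \<alpha> - real l * \<beta> + \<theta>))"

definition weighted_covariance_sum :: "(int \<Rightarrow> real) \<Rightarrow> nat \<Rightarrow> nat \<Rightarrow> nat \<Rightarrow> real \<Rightarrow> real \<Rightarrow> real \<Rightarrow> real" where
  "weighted_covariance_sum \<rho> p q n \<theta> S T = (\<Sum>k=1..n. \<Sum>l=1..n.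
     \<rho> (int k - int l) * (power_weight p n k * power_weight q n l) * cos (real k * S - real l * T + \<theta>))"

lemma power_weight_le_one: "k \<le> n \<Longrightarrow> power_weight p n k \<le> 1"
  by (auto simp: power_weight_def divide_le_eq_1 intro!: power_le_one)

lemma sum_power_weight_squared_le: "(\<Sum>k=1..n. (power_weight p n k)\<^sup>2) \<le> real n"
proof -
  have "(\<Sum>k=1..n. (power_weight p n k)\<^sup>2) \<le> (\<Sum>k=1..n. 1)"
    by (intro sum_mono) (auto simp: power_weight_def intro!: power_le_one power_weight_le_one)
  then show ?thesis by simp
qed

lemma weighted_cos_sum_eq_Re:
  "weighted_cos_sum p q n \<theta> \<alpha> \<beta> = Re (cis \<theta> * weighted_cis_sum p n \<alpha> * cnj (weighted_cis_sum q n \<beta>))"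
proof -
  have "weighted_cis_sum p n \<alpha> * cnj (weighted_cis_sum q n \<beta>) =
     (\<Sum>k=1..n. \<Sum>l=1..n. of_real (power_weight p n k * power_weight q n l) * cis (real k * \<alpha> - real l * \<beta>))"
    unfolding weighted_cis_sum_def cnj_sum sum_product
    by (intro sum.cong refl) (simp add: cis_cnj cis_mult)
  then have "cis \<theta> * weighted_cis_sum p n \<alpha> * cnj (weighted_cis_sum q n \<beta>) =
     cis \<theta> * (\<Sum>k=1..n. \<Sum>l=1..n. of_real (power_weight p n k * power_weight q n l) * cis (real k * \<alpha> - real l * \<beta>))"
    by (simp add: mult.assoc)
  also have "\<dots> = (\<Sum>k=1..n. \<Sum>l=1..n. of_real (power_weight p n k * power_weight q n l) * cis (real k * \<alpha> - real l * \<beta> + \<theta>))"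
    unfolding sum_distrib_left
    by (intro sum.cong refl) (simp add: mult.left_commute cis_mult add.commute)
  finally have "cis \<theta> * weighted_cis_sum p n \<alpha> * cnj (weighted_cis_sum q n \<beta>) = \<dots>" .
  then show ?thesis
    by (simp add: weighted_cos_sum_def Re_sum)
qed

lemma abs_weighted_cos_sum_le:
  "\<bar>weighted_cos_sum p q n \<theta> \<alpha> \<beta>\<bar> \<le> cmod (weighted_cis_sum p n \<alpha>) * cmod (weighted_cis_sum q n \<beta>)"
  using abs_Re_le_cmod[of "cis \<theta> * weighted_cis_sum p n \<alpha> * cnj (weighted_cis_sum q n \<beta>)"]
  by (simp add: weighted_cos_sum_eq_Re norm_mult)

lemma weighted_cos_sum_diagonal: "weighted_cos_sum p p n 0 \<alpha> \<alpha> = (cmod (weighted_cis_sum p n \<alpha>))\<^sup>2"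
  by (simp add: weighted_cos_sum_eq_Re complex_mult_cnj cmod_def)

lemma abs_sin_half_mult_weighted_cis_sum_le: "\<bar>sin (\<alpha> / 2)\<bar> * cmod (weighted_cis_sum p n \<alpha>) \<le> 1"
proof -
  \<comment> \<open>\<open>power_weight 0 n 0 = 1\<close>, so the weight at 0 is set explicitly.\<close>
  define w where "w k = (if k = 0 then 0 else power_weight p n k)" for k
  have w_weight: "w k = power_weight p n k" if "k \<in> {1..n}" for k
    using that by (simp add: w_def)
  have "mono w"
    by (auto intro!: monoI simp: w_def power_weight_def intro!: power_mono divide_right_mono)
  moreover have "w n \<le> 1"
    by (simp add: w_def power_weight_le_one)
  moreover have "weighted_cis_sum p n \<alpha> = (\<Sum>k=1..n. of_real (w k) * cis \<alpha> ^ k)"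
    unfolding weighted_cis_sum_def Complex.DeMoivre by (intro sum.cong refl) (simp only: w_weight)
  ultimately show ?thesis
    using norm_mult_sum_mono_weights_powers_le[of w "cis \<alpha>" n] by (simp add: w_def norm_cis_minus_one)
qed

lemma has_integral_weighted_cos_sum:
  "((\<lambda>x. weighted_cos_sum p q n \<theta> (S - x) (T - x)) has_integral
     2 * pi * (\<Sum>k=1..n. power_weight p n k * power_weight q n k * cos (real k * S - real k * T + \<theta>))) {0..2 * pi}"
proof -
  have "weighted_cos_sum p q n \<theta> (S - x) (T - x) = (\<Sum>k=1..n. \<Sum>l=1..n. power_weight p n k * power_weight q n l *
      cos (of_int (int l - int k) * x + (real k * S - real l * T + \<theta>)))" for x
    unfolding weighted_cos_sum_def by (intro sum.cong refl) (simp add: algebra_simps)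
  moreover have "((\<lambda>x. \<Sum>k=1..n. \<Sum>l=1..n. power_weight p n k * power_weight q n l *
      cos (of_int (int l - int k) * x + (real k * S - real l * T + \<theta>))) has_integral
      (\<Sum>k=1..n. \<Sum>l=1..n. power_weight p n k * power_weight q n l *
        (if int l - int k = 0 then 2 * pi * cos (real k * S - real l * T + \<theta>) else 0))) {0..2 * pi}"
    by (intro has_integral_sum finite_atLeastAtMost ballI has_integral_mult_right has_integral_cos_int_mult)
  moreover have "(\<Sum>l=1..n. power_weight p n k * power_weight q n l *
        (if int l - int k = 0 then 2 * pi * cos (real k * S - real l * T + \<theta>) else 0))
      = 2 * pi * (power_weight p n k * power_weight q n k * cos (real k * S - real k * T + \<theta>))"
    if "k \<in> {1..n}" for k
    using that by (simp add: if_distrib[of "\<lambda>x. _ * x"] sum.delta' cong: if_cong)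
  ultimately show ?thesis
    by (simp add: sum_distrib_left)
qed

lemma has_integral_density_mult_weighted_cos_sum:
  assumes "\<And>j c. ((\<lambda>x. \<psi> x * cos (c - of_int j * x)) has_integral (2 * pi * \<rho> j * cos c)) {0..2 * pi}"
  shows "((\<lambda>x. \<psi> x * weighted_cos_sum p q n \<theta> (S - x) (T - x)) has_integral
           (2 * pi * weighted_covariance_sum \<rho> p q n \<theta> S T)) {0..2 * pi}"
proof -
  have "((\<lambda>x. \<Sum>k=1..n. \<Sum>l=1..n. (power_weight p n k * power_weight q n l) *
        (\<psi> x * cos ((real k * S - real l * T + \<theta>) - of_int (int k - int l) * x))) has_integral
      (\<Sum>k=1..n. \<Sum>l=1..n. (power_weight p n k * power_weight q n l) *
        (2 * pi * \<rho> (int k - int l) * cos (real k * S - real l * T + \<theta>)))) {0..2 * pi}"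
    by (intro has_integral_sum finite_atLeastAtMost ballI has_integral_mult_right assms)
  then show ?thesis
    unfolding weighted_cos_sum_def weighted_covariance_sum_def sum_distrib_left
    by (simp add: algebra_simps)
qed

lemma abs_sin_half_diff_ge: "\<bar>sin ((S - x) / 2)\<bar> \<ge> \<bar>sin ((s - x) / 2)\<bar> - \<bar>S - s\<bar> / 2"
  for S s x :: real
proof -
  have "\<bar>sin ((s - x) / 2) - sin ((S - x) / 2)\<bar> \<le> \<bar>(s - x) / 2 - (S - x) / 2\<bar>"
    by (rule abs_sin_diff_le)
  also have "\<dots> = \<bar>S - s\<bar> / 2"
    by (simp add: abs_minus_commute flip: diff_divide_distrib)
  finally show ?thesis
    using abs_triangle_ineq2[of "sin ((s - x) / 2)" "sin ((S - x) / 2)"] by linarith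
qed

lemma norm_weighted_cis_sum_le:
  assumes "c > 0" "\<bar>sin (\<alpha> / 2)\<bar> \<ge> c"
  shows "cmod (weighted_cis_sum p n \<alpha>) \<le> 1 / c"
proof -
  have "c * cmod (weighted_cis_sum p n \<alpha>) \<le> \<bar>sin (\<alpha> / 2)\<bar> * cmod (weighted_cis_sum p n \<alpha>)"
    using assms(2) by (intro mult_right_mono) auto
  also have "\<dots> \<le> 1"
    by (rule abs_sin_half_mult_weighted_cis_sum_le)
  finally show ?thesis
    using assms(1) by (simp add: field_simps)
qed

lemma abs_weighted_cos_sum_le_mean_square:
  "\<bar>weighted_cos_sum p q n \<theta> \<alpha> \<beta>\<bar> \<le>
     ((cmod (weighted_cis_sum p n \<alpha>))\<^sup>2 + (cmod (weighted_cis_sum q n \<beta>))\<^sup>2) / 2"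
  using abs_weighted_cos_sum_le[of p q n \<theta> \<alpha> \<beta>]
    sum_squares_bound[of "cmod (weighted_cis_sum p n \<alpha>)" "cmod (weighted_cis_sum q n \<beta>)"]
  by (simp add: field_simps)

lemma abs_weighted_cos_sum_le_sin_half:
  assumes "\<eta> > 0" "\<bar>sin (\<alpha> / 2)\<bar> \<ge> \<eta> / 2" "\<bar>sin (\<beta> / 2)\<bar> \<ge> \<eta> / 2"
  shows "\<bar>weighted_cos_sum p q n \<theta> \<alpha> \<beta>\<bar> \<le> 4 / \<eta>\<^sup>2"
proof -
  have "\<bar>weighted_cos_sum p q n \<theta> \<alpha> \<beta>\<bar> \<le> cmod (weighted_cis_sum p n \<alpha>) * cmod (weighted_cis_sum q n \<beta>)"
    by (rule abs_weighted_cos_sum_le)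
  also have "\<dots> \<le> (1 / (\<eta> / 2)) * (1 / (\<eta> / 2))"
    using assms by (intro mult_mono norm_weighted_cis_sum_le) auto
  finally show ?thesis
    by (simp add: power2_eq_square)
qed

(* Near s the factor psi x - psi s is small; away from s both weighted sums are O(1/eta) by Abel summation. *)
lemma abs_density_diff_mult_weighted_cos_sum_le:
  fixes \<psi> :: "real \<Rightarrow> real"
  assumes bound: "\<And>x. \<bar>\<psi> x\<bar> \<le> B" and "\<eta> > 0"
    and near: "\<And>x. \<bar>sin ((x - s) / 2)\<bar> < \<eta> \<Longrightarrow> \<bar>\<psi> x - \<psi> s\<bar> < \<epsilon>"
    and "\<bar>S - s\<bar> \<le> \<eta>" "\<bar>T - s\<bar> \<le> \<eta>"
  shows "\<bar>(\<psi> x - \<psi> s) * weighted_cos_sum p q n \<theta> (S - x) (T - x)\<bar> \<le>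
     \<epsilon> * ((cmod (weighted_cis_sum p n (S - x)))\<^sup>2 + (cmod (weighted_cis_sum q n (T - x)))\<^sup>2) / 2 + 8 * B / \<eta>\<^sup>2"
proof -
  have "\<epsilon> > 0" "8 * B / \<eta>\<^sup>2 \<ge> 0"
    using near[of s] bound[of s] \<open>\<eta> > 0\<close> by auto
  show ?thesis
  proof (cases "\<bar>sin ((x - s) / 2)\<bar> < \<eta>")
    case True
    then have "\<bar>(\<psi> x - \<psi> s) * weighted_cos_sum p q n \<theta> (S - x) (T - x)\<bar> \<le>
        \<epsilon> * (((cmod (weighted_cis_sum p n (S - x)))\<^sup>2 + (cmod (weighted_cis_sum q n (T - x)))\<^sup>2) / 2)"
      unfolding abs_mult using near \<open>\<epsilon> > 0\<close>
      by (intro mult_mono abs_weighted_cos_sum_le_mean_square) (auto intro: less_imp_le)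
    then show ?thesis
      using \<open>8 * B / \<eta>\<^sup>2 \<ge> 0\<close> by linarith
  next
    case False
    moreover have "\<bar>sin ((s - x) / 2)\<bar> = \<bar>sin ((x - s) / 2)\<bar>"
      using sin_minus[of "(x - s) / 2"] by (simp add: minus_divide_left)
    ultimately have "\<bar>sin ((s - x) / 2)\<bar> \<ge> \<eta>"
      by simp
    then have "\<bar>sin ((S - x) / 2)\<bar> \<ge> \<eta> / 2" "\<bar>sin ((T - x) / 2)\<bar> \<ge> \<eta> / 2"
      using abs_sin_half_diff_ge[where S = S and s = s and x = x]
        abs_sin_half_diff_ge[where S = T and s = s and x = x] assms(4,5)
      by linarith+
    then have "\<bar>(\<psi> x - \<psi> s) * weighted_cos_sum p q n \<theta> (S - x) (T - x)\<bar> \<le> (2 * B) * (4 / \<eta>\<^sup>2)"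
      unfolding abs_mult using bound[of x] bound[of s] \<open>\<eta> > 0\<close>
      by (intro mult_mono abs_weighted_cos_sum_le_sin_half) auto
    then show ?thesis
      using \<open>\<epsilon> > 0\<close> by (simp add: add_increasing)
  qed
qed

lemma weighted_covariance_sum_approx:
  fixes \<psi> :: "real \<Rightarrow> real"
  assumes spectral: "\<And>j c. ((\<lambda>x. \<psi> x * cos (c - of_int j * x)) has_integral (2 * pi * \<rho> j * cos c)) {0..2 * pi}"
    and bound: "\<And>x. \<bar>\<psi> x\<bar> \<le> B" and "\<eta> > 0"
    and near: "\<And>x. \<bar>sin ((x - s) / 2)\<bar> < \<eta> \<Longrightarrow> \<bar>\<psi> x - \<psi> s\<bar> < \<epsilon>"
    and "\<bar>S - s\<bar> \<le> \<eta>" "\<bar>T - s\<bar> \<le> \<eta>" "n > 0"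
  shows "\<bar>weighted_covariance_sum \<rho> p q n \<theta> S T / real n -
           \<psi> s * (\<Sum>k=1..n. power_weight p n k * power_weight q n k * cos (real k * S - real k * T + \<theta>)) / real n\<bar>
         \<le> \<epsilon> + 8 * B / (\<eta>\<^sup>2 * real n)"
proof -
  define G E where "G = weighted_covariance_sum \<rho> p q n \<theta> S T"
    and "E = (\<Sum>k=1..n. power_weight p n k * power_weight q n k * cos (real k * S - real k * T + \<theta>))"
  define P Q where "P = (\<Sum>k=1..n. (power_weight p n k)\<^sup>2)" and "Q = (\<Sum>k=1..n. (power_weight q n k)\<^sup>2)"
  define g where "g x = \<epsilon> * ((cmod (weighted_cis_sum p n (S - x)))\<^sup>2 + (cmod (weighted_cis_sum q n (T - x)))\<^sup>2) / 2
    + 8 * B / \<eta>\<^sup>2" for x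
  have "\<epsilon> > 0"
    using near[of s] \<open>\<eta> > 0\<close> by auto
  have I: "((\<lambda>x. (\<psi> x - \<psi> s) * weighted_cos_sum p q n \<theta> (S - x) (T - x)) has_integral 2 * pi * G - \<psi> s * (2 * pi * E))
      {0..2 * pi}"
    unfolding G_def E_def left_diff_distrib
    by (intro has_integral_diff has_integral_mult_right has_integral_density_mult_weighted_cos_sum
        has_integral_weighted_cos_sum spectral)
  have Ig: "(g has_integral \<epsilon> * (2 * pi * P + 2 * pi * Q) / 2 + 8 * B / \<eta>\<^sup>2 * (2 * pi)) {0..2 * pi}"
    using has_integral_weighted_cos_sum[of p p n 0 S S] has_integral_weighted_cos_sum[of q q n 0 T T]
      has_integral_const_real[of "8 * B / \<eta>\<^sup>2" 0 "2 * pi"]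
    unfolding g_def P_def Q_def weighted_cos_sum_diagonal
    by (intro has_integral_add has_integral_divide has_integral_mult_right)
       (simp_all add: power2_eq_square mult.commute)
  have "2 * pi * G - \<psi> s * (2 * pi * E) = 2 * pi * (G - \<psi> s * E)"
    by (simp add: algebra_simps)
  then have "2 * pi * \<bar>G - \<psi> s * E\<bar> = \<bar>2 * pi * G - \<psi> s * (2 * pi * E)\<bar>"
    by (simp add: abs_mult)
  also have "\<dots> \<le> \<epsilon> * (2 * pi * P + 2 * pi * Q) / 2 + 8 * B / \<eta>\<^sup>2 * (2 * pi)"
    using has_integral_norm_bound_integral_component[OF I Ig, of 1]
      abs_density_diff_mult_weighted_cos_sum_le[where \<psi> = \<psi> and B = B and \<eta> = \<eta> and \<epsilon> = \<epsilon>,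
        OF bound \<open>\<eta> > 0\<close> near assms(5,6)]
    by (simp add: g_def)
  also have "\<dots> \<le> 2 * pi * (\<epsilon> * real n + 8 * B / \<eta>\<^sup>2)"
  proof -
    have "pi * (\<epsilon> * (P + Q)) \<le> pi * (\<epsilon> * (2 * real n))"
      using sum_power_weight_squared_le[of p n] sum_power_weight_squared_le[of q n] \<open>\<epsilon> > 0\<close>
      unfolding P_def Q_def by (intro mult_left_mono) auto
    then show ?thesis
      by (simp add: algebra_simps)
  qed
  finally have "\<bar>G - \<psi> s * E\<bar> \<le> \<epsilon> * real n + 8 * B / \<eta>\<^sup>2"
    by simp
  then have "\<bar>G - \<psi> s * E\<bar> / real n \<le> (\<epsilon> * real n + 8 * B / \<eta>\<^sup>2) / real n"
    by (intro divide_right_mono) auto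
  then show ?thesis
    using \<open>n > 0\<close> by (simp add: G_def E_def add_divide_distrib flip: diff_divide_distrib)
qed

lemma pderiv2_cos_sum:
  fixes c \<alpha> \<beta> :: "'i \<Rightarrow> real"
  assumes "finite I"
  shows "pderiv2 p q (\<lambda>s t. \<Sum>i\<in>I. c i * cos (\<alpha> i * s - \<beta> i * t)) S T =
         (\<Sum>i\<in>I. c i * \<alpha> i ^ p * (- \<beta> i) ^ q * cos (\<alpha> i * S - \<beta> i * T + real (p + q) * pi / 2))"
proof -
  have inner: "(deriv ^^ q) (\<lambda>t. \<Sum>i\<in>I. c i * cos (\<alpha> i * s - \<beta> i * t)) T =
      (\<Sum>i\<in>I. (c i * (- \<beta> i) ^ q) * cos (\<alpha> i * s + (- \<beta> i * T + real q * pi / 2)))" for s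
  proof -
    have "(\<lambda>t. \<Sum>i\<in>I. c i * cos (\<alpha> i * s - \<beta> i * t)) = (\<lambda>t. \<Sum>i\<in>I. c i * cos (- \<beta> i * t + \<alpha> i * s))"
      by (simp add: algebra_simps)
    then show ?thesis
      by (simp only: higher_deriv_cos_sum[OF assms]) (intro sum.cong refl, simp add: algebra_simps)
  qed
  have "pderiv2 p q (\<lambda>s t. \<Sum>i\<in>I. c i * cos (\<alpha> i * s - \<beta> i * t)) S T =
      (deriv ^^ p) (\<lambda>s. \<Sum>i\<in>I. (c i * (- \<beta> i) ^ q) * cos (\<alpha> i * s + (- \<beta> i * T + real q * pi / 2))) S"
    unfolding pderiv2_def inner ..
  also have "\<dots> = (\<Sum>i\<in>I. (c i * (- \<beta> i) ^ q) * \<alpha> i ^ p *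
      cos (\<alpha> i * S + (- \<beta> i * T + real q * pi / 2) + real p * pi / 2))"
    by (simp only: higher_deriv_cos_sum[OF assms])
  also have "\<dots> = (\<Sum>i\<in>I. c i * \<alpha> i ^ p * (- \<beta> i) ^ q * cos (\<alpha> i * S - \<beta> i * T + real (p + q) * pi / 2))"
    by (intro sum.cong refl) (simp add: algebra_simps add_divide_distrib)
  finally show ?thesis .
qed

lemma pderiv2_covariance_cos_sum:
  assumes "n > 0"
  shows "pderiv2 p q (\<lambda>s t. (1 / real n) * (\<Sum>k=1..n. \<Sum>l=1..n. \<rho> (int k - int l) * cos (real k * s - real l * t))) S T
           / real n ^ (p + q)
         = (-1) ^ q * weighted_covariance_sum \<rho> p q n (real (p + q) * pi / 2) S T / real n"
proof -
  define c where "c i = \<rho> (int (fst i) - int (snd i)) / real n" for i :: "nat \<times> nat"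
  have "(\<lambda>s t. (1 / real n) * (\<Sum>k=1..n. \<Sum>l=1..n. \<rho> (int k - int l) * cos (real k * s - real l * t))) =
      (\<lambda>s t. \<Sum>i\<in>{1..n} \<times> {1..n}. c i * cos (real (fst i) * s - real (snd i) * t))"
    by (simp add: c_def sum.cartesian_product sum_distrib_left case_prod_beta)
  then have pderiv2_eq: "pderiv2 p q (\<lambda>s t. (1 / real n) * (\<Sum>k=1..n. \<Sum>l=1..n. \<rho> (int k - int l) * cos (real k * s - real l * t))) S T
      = (\<Sum>i\<in>{1..n} \<times> {1..n}. c i * real (fst i) ^ p * (- real (snd i)) ^ q *
          cos (real (fst i) * S - real (snd i) * T + real (p + q) * pi / 2))"
    by (simp only: pderiv2_cos_sum[OF finite_SigmaI[OF finite_atLeastAtMost finite_atLeastAtMost]])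
  have "pderiv2 p q (\<lambda>s t. (1 / real n) * (\<Sum>k=1..n. \<Sum>l=1..n. \<rho> (int k - int l) * cos (real k * s - real l * t))) S T
      / real n ^ (p + q) = (\<Sum>i\<in>{1..n} \<times> {1..n}. (-1) ^ q * (\<rho> (int (fst i) - int (snd i)) *
      (power_weight p n (fst i) * power_weight q n (snd i)) *
      cos (real (fst i) * S - real (snd i) * T + real (p + q) * pi / 2)) / real n)"
    unfolding pderiv2_eq sum_divide_distrib
    by (intro sum.cong refl)
       (simp add: c_def power_weight_def power_minus[of "real l" for l] power_divide power_add field_split_simps)
  also have "\<dots> = (-1) ^ q * weighted_covariance_sum \<rho> p q n (real (p + q) * pi / 2) S T / real n"
    unfolding weighted_covariance_sum_def sum.cartesian_product case_prod_beta
    by (simp only: sum_distrib_left sum_divide_distrib)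
  finally show ?thesis .
qed

lemma (in gaussian_coefficients) pderiv2_rn_scaled:
  assumes "n > 0"
  shows "pderiv2 p q (rn M a b n) S T / real n ^ (p + q) =
           (-1) ^ q * weighted_covariance_sum \<rho> p q n (real (p + q) * pi / 2) S T / real n"
  unfolding rn_eq_cos_sum[abs_def] using assms by (rule pderiv2_covariance_cos_sum)

section \<open>Convergence\<close>

lemma diagonal_weighted_cos_sum_approx:
  assumes "n > 0"
  shows "\<bar>(\<Sum>k=1..n. power_weight p n k * power_weight q n k *
            cos (real k * (s + u / real n) - real k * (s + v / real n) + real (p + q) * pi / 2)) / real n
          - (deriv ^^ (p + q)) sinc (u - v)\<bar> \<le> (real (p + q) + \<bar>u - v\<bar>) / real n"
proof -
  define f where "f y = y ^ (p + q) * cos (y * (u - v) + real (p + q) * pi / 2)" for y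
  have "real k * (s + u / real n) - real k * (s + v / real n) = real k / real n * (u - v)" for k
    using assms by (simp add: field_simps)
  then have "power_weight p n k * power_weight q n k *
      cos (real k * (s + u / real n) - real k * (s + v / real n) + real (p + q) * pi / 2) = f (real k / real n)" for k
    by (simp add: f_def power_weight_def power_add)
  moreover have "(deriv ^^ (p + q)) sinc (u - v) = integral {0..1} f"
    by (simp add: higher_deriv_sinc f_def[abs_def])
  moreover have "\<bar>(\<Sum>k=1..n. f (real k / real n)) / real n - integral {0..1} f\<bar> \<le> (real (p + q) + \<bar>u - v\<bar>) / real n"
    unfolding f_def using assms
    by (intro riemann_sum_Lipschitz_error abs_power_mult_cos_diff_le) (auto intro!: continuous_intros)
  ultimately show ?thesis
    by simp
qed

lemma uniform_limit_sequentially_if_error_bound: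
  fixes f :: "nat \<Rightarrow> 'a \<Rightarrow> real"
  assumes "\<And>\<epsilon>. \<epsilon> > 0 \<Longrightarrow> \<exists>C N. \<forall>n\<ge>N. \<forall>x\<in>X. \<bar>f n x - g x\<bar> \<le> \<epsilon> + C / real n"
  shows "uniform_limit X f g sequentially"
  unfolding uniform_limit_iff
proof (intro allI impI)
  fix e :: real
  assume "e > 0"
  then obtain C N where CN: "\<And>n x. n \<ge> N \<Longrightarrow> x \<in> X \<Longrightarrow> \<bar>f n x - g x\<bar> \<le> e / 2 + C / real n"
    using assms[of "e / 2"] by auto
  have "eventually (\<lambda>n. C / real n < e / 2) sequentially"
    using order_tendstoD(2)[OF lim_const_over_n[of C] half_gt_zero[OF \<open>e > 0\<close>]] .
  with eventually_ge_at_top[of N] show "\<forall>\<^sub>F n in sequentially. \<forall>x\<in>X. dist (f n x) (g x) < e"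
  proof eventually_elim
    case (elim n)
    show ?case
    proof
      fix x
      assume "x \<in> X"
      with CN[of n x] elim show "dist (f n x) (g x) < e"
        unfolding dist_real_def by linarith
    qed
  qed
qed

lemma weighted_covariance_sum_uniform_limit:
  fixes \<psi> :: "real \<Rightarrow> real" and K :: "real set"
  assumes cont: "continuous_on UNIV \<psi>" and per: "\<And>x. \<psi> (x + 2 * pi) = \<psi> x"
    and spectral: "\<And>j c. ((\<lambda>x. \<psi> x * cos (c - of_int j * x)) has_integral (2 * pi * \<rho> j * cos c)) {0..2 * pi}"
    and "compact K"
  shows "uniform_limit (UNIV \<times> K \<times> K)
           (\<lambda>n (s, u, v). weighted_covariance_sum \<rho> p q n (real (p + q) * pi / 2) (s + u / real n) (s + v / real n) / real n)
           (\<lambda>(s, u, v). \<psi> s * (deriv ^^ (p + q)) sinc (u - v))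
           sequentially"
proof (rule uniform_limit_sequentially_if_error_bound)
  fix \<epsilon> :: real
  assume "\<epsilon> > 0"
  obtain B where B: "\<And>x. \<bar>\<psi> x\<bar> \<le> B"
    using periodic_continuous_bounded[OF cont per] by blast
  obtain R where R: "\<And>u. u \<in> K \<Longrightarrow> \<bar>u\<bar> \<le> R"
    using compact_imp_bounded[OF \<open>compact K\<close>] by (auto simp: bounded_iff)
  obtain \<eta> where "\<eta> > 0" and near: "\<And>x s. \<bar>sin ((x - s) / 2)\<bar> < \<eta> \<Longrightarrow> \<bar>\<psi> x - \<psi> s\<bar> < \<epsilon>"
    using periodic_continuous_modulus[OF cont per \<open>\<epsilon> > 0\<close>] by blast
  define m where "m = p + q"
  have "\<bar>weighted_covariance_sum \<rho> p q n (real m * pi / 2) (s + u / real n) (s + v / real n) / real n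
          - \<psi> s * (deriv ^^ m) sinc (u - v)\<bar> \<le> \<epsilon> + (8 * B / \<eta>\<^sup>2 + B * (real m + 2 * R)) / real n"
    if "n \<ge> max 1 (nat \<lceil>R / \<eta>\<rceil>)" "u \<in> K" "v \<in> K" for n s u v
  proof -
    define G where "G = weighted_covariance_sum \<rho> p q n (real m * pi / 2) (s + u / real n) (s + v / real n)"
    define E where "E = (\<Sum>k=1..n. power_weight p n k * power_weight q n k *
      cos (real k * (s + u / real n) - real k * (s + v / real n) + real m * pi / 2))"
    have "n > 0" "R / \<eta> \<le> real n"
      using that(1) by linarith+
    then have "\<bar>w\<bar> / real n \<le> \<eta>" if "w \<in> K" for w
      using R[OF that] \<open>\<eta> > 0\<close> by (simp add: field_simps)
    then have "\<bar>s + u / real n - s\<bar> \<le> \<eta>" "\<bar>s + v / real n - s\<bar> \<le> \<eta>"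
      using that(2,3) by auto
    then have covariance_approx: "\<bar>G / real n - \<psi> s * E / real n\<bar> \<le> \<epsilon> + 8 * B / (\<eta>\<^sup>2 * real n)"
      unfolding G_def E_def using \<open>n > 0\<close>
      by (intro weighted_covariance_sum_approx[OF spectral B \<open>\<eta> > 0\<close> near]) auto
    have diagonal_approx: "\<bar>\<psi> s\<bar> * \<bar>E / real n - (deriv ^^ m) sinc (u - v)\<bar> \<le> B * ((real m + 2 * R) / real n)"
    proof (intro mult_mono B)
      have "\<bar>E / real n - (deriv ^^ m) sinc (u - v)\<bar> \<le> (real m + \<bar>u - v\<bar>) / real n"
        unfolding E_def m_def using \<open>n > 0\<close> by (rule diagonal_weighted_cos_sum_approx)
      also have "\<dots> \<le> (real m + 2 * R) / real n"
        using R[OF that(2)] R[OF that(3)] by (intro divide_right_mono) auto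
      finally show "\<bar>E / real n - (deriv ^^ m) sinc (u - v)\<bar> \<le> (real m + 2 * R) / real n" .
    qed (use B[of s] in auto)
    have "G / real n - \<psi> s * (deriv ^^ m) sinc (u - v) =
        (G / real n - \<psi> s * E / real n) + \<psi> s * (E / real n - (deriv ^^ m) sinc (u - v))"
      by (simp add: algebra_simps)
    then have "\<bar>G / real n - \<psi> s * (deriv ^^ m) sinc (u - v)\<bar> \<le>
        \<bar>G / real n - \<psi> s * E / real n\<bar> + \<bar>\<psi> s\<bar> * \<bar>E / real n - (deriv ^^ m) sinc (u - v)\<bar>"
      by (simp only: abs_triangle_ineq flip: abs_mult)
    also have "\<dots> \<le> \<epsilon> + 8 * B / (\<eta>\<^sup>2 * real n) + B * ((real m + 2 * R) / real n)"
      using covariance_approx diagonal_approx by linarith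
    also have "\<dots> = \<epsilon> + (8 * B / \<eta>\<^sup>2 + B * (real m + 2 * R)) / real n"
      by (simp add: add_divide_distrib distrib_left)
    finally show ?thesis
      unfolding G_def .
  qed
  then show "\<exists>C N. \<forall>n\<ge>N. \<forall>x\<in>UNIV \<times> K \<times> K.
      \<bar>(case x of (s, u, v) \<Rightarrow> weighted_covariance_sum \<rho> p q n (real (p + q) * pi / 2) (s + u / real n) (s + v / real n) / real n)
       - (case x of (s, u, v) \<Rightarrow> \<psi> s * (deriv ^^ (p + q)) sinc (u - v))\<bar> \<le> \<epsilon> + C / real n"
    unfolding m_def
    by (intro exI[of _ "8 * B / \<eta>\<^sup>2 + B * (real (p + q) + 2 * R)"] exI[of _ "max 1 (nat \<lceil>R / \<eta>\<rceil>)"]) auto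
qed

theorem lemma2:
  fixes M :: "'w measure"
    and a b :: "nat \<Rightarrow> 'w \<Rightarrow> real"
    and \<rho> :: "int \<Rightarrow> real"
    and \<psi> :: "real \<Rightarrow> real"
    and p q :: nat
  assumes "prob_space M"
    and "centered_gaussian_seq M a"
    and "centered_gaussian_seq M b"
    and "prob_space.indep_var M (Pi\<^sub>M {1..} (\<lambda>_. borel)) (\<lambda>\<omega>. \<lambda>k\<in>{1..}. a k \<omega>)
                                (Pi\<^sub>M {1..} (\<lambda>_. borel)) (\<lambda>\<omega>. \<lambda>k\<in>{1..}. b k \<omega>)"
    and "\<And>k l. k \<ge> 1 \<Longrightarrow> l \<ge> 1 \<Longrightarrow>
           prob_space.expectation M (\<lambda>\<omega>. a k \<omega> * a l \<omega>) = \<rho> (int k - int l)"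
    and "\<And>k l. k \<ge> 1 \<Longrightarrow> l \<ge> 1 \<Longrightarrow>
           prob_space.expectation M (\<lambda>\<omega>. b k \<omega> * b l \<omega>) = \<rho> (int k - int l)"
    and "continuous_on UNIV \<psi>"
    and "\<And>x. \<psi> x > 0"
    and "\<And>x. \<psi> (x + 2 * pi) = \<psi> x"
    and "\<And>k. complex_of_real (\<rho> k) =
           integral {0..2*pi} (\<lambda>u. exp (- \<i> * of_int k * of_real u) * of_real (\<psi> u)) / (2 * pi)"
    and "p \<le> 4" and "q \<le> 4"
    and "compact K"
  shows "uniform_limit (UNIV \<times> K \<times> K)
           (\<lambda>n (s, u, v). pderiv2 p q (rn M a b n) (s + u / real n) (s + v / real n) / real n ^ (p + q))
           (\<lambda>(s, u, v). \<psi> s * (-1) ^ q * (deriv ^^ (p + q)) sinc (u - v))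
           sequentially"
proof -
  interpret gaussian_coefficients M a b \<rho>
    using assms(1-6) by (simp add: gaussian_coefficients_def gaussian_coefficients_axioms_def)
  have limit: "uniform_limit (UNIV \<times> K \<times> K)
      (\<lambda>n x. (-1) ^ q * (case x of (s, u, v) \<Rightarrow>
         weighted_covariance_sum \<rho> p q n (real (p + q) * pi / 2) (s + u / real n) (s + v / real n) / real n))
      (\<lambda>x. (-1) ^ q * (case x of (s, u, v) \<Rightarrow> \<psi> s * (deriv ^^ (p + q)) sinc (u - v)))
      sequentially"
    by (intro bounded_linear.uniform_limit[OF bounded_linear_mult_right] weighted_covariance_sum_uniform_limit
        has_integral_spectral_density_cos assms(7,9,10,13))
  have eventually_eq: "\<forall>\<^sub>F n in sequentially. \<forall>x\<in>UNIV \<times> K \<times> K.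
      (case x of (s, u, v) \<Rightarrow> pderiv2 p q (rn M a b n) (s + u / real n) (s + v / real n) / real n ^ (p + q)) =
      (-1) ^ q * (case x of (s, u, v) \<Rightarrow>
         weighted_covariance_sum \<rho> p q n (real (p + q) * pi / 2) (s + u / real n) (s + v / real n) / real n)"
    using eventually_gt_at_top[of 0] by eventually_elim (auto simp: pderiv2_rn_scaled)
  have limit_eq: "(case x of (s, u, v) \<Rightarrow> \<psi> s * (-1) ^ q * (deriv ^^ (p + q)) sinc (u - v)) =
      (-1) ^ q * (case x of (s, u, v) \<Rightarrow> \<psi> s * (deriv ^^ (p + q)) sinc (u - v))" for x
    by (simp add: case_prod_beta)
  show ?thesis
    by (rule uniform_limit_cong[OF eventually_eq limit_eq, THEN iffD2, OF limit])
qed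

end
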